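(* Let $n$ be a positive integer and let $\lambda=(\lambda_1,\dots,\lambda_\ell)$ and $\mu=(\mu_1,\dots,\mu_{\ell'})$ be integer partitions of $n$ with $\mathrm{pre}_2(\lambda) = \mathrm{pre}_2(\mu)$. Then for every nonnegative integer $m$, $\sum_{i=1}^{\ell} \lambda_i^{2^m} = \sum_{i=1}^{\ell'} \mu_i^{2^m}$.
   Context: An integer partition $\lambda = (\lambda_1, \dots, \lambda_\ell)$ of a positive integer $n$ is a weakly decreasing finite sequence of positive integers whose sum is $n$; the $\lambda_i$ are its parts and $\ell(\lambda)=\ell$ is its length. For a partition $\lambda = (\lambda_1,\dots,\lambda_\ell)$, $\mathrm{pre}_2(\lambda)$ denotes the partition whose multiset of parts is the multiset $\{\!\{\lambda_i\lambda_j : 1 \le i < j \le \ell\}\!\}$ (with multiplicities, arranged in weakly decreasing order); if $\ell < 2$ it is the empty partition. *)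

theory Defs
  imports Main "HOL-Library.Multiset"
begin

definition is_partition :: "nat \<Rightarrow> nat list \<Rightarrow> bool" where
  "is_partition n lam \<longleftrightarrow> sorted_wrt (\<ge>) lam \<and> (\<forall>x\<in>set lam. 0 < x) \<and> sum_list lam = n"

text \<open>pre_2: the multiset of pairwise products lam_i * lam_j with i < j (a partition is
determined by its multiset of parts, so we compare multisets).\<close>
definition pre2 :: "nat list \<Rightarrow> nat multiset" where
  "pre2 lam = mset [lam ! i * lam ! j. (i, j) \<leftarrow> List.product [0..<length lam] [0..<length lam], i < j]"

end

theory Submission imports Defs begin

text \<open>Write p k for the sum of the k-th powers of the parts. Expanding the square of that sum
  gives (p k)^2 = p (2 k) + 2 * (sum of x^k over pre2), so p (2 k) is determined by p k and pre2.
  Since p 1 = n, induction on m determines every p (2^m).\<close>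

lemma pre2_Nil [simp]: "pre2 [] = {#}"
  by (simp add: pre2_def)

lemma pre2_Cons: "pre2 (x # xs) = image_mset ((*) x) (mset xs) + pre2 xs"
proof -
  have idx: "[0..<length (x # xs)] = 0 # map Suc [0..<length xs]"
    by (simp add: upt_conv_Cons map_Suc_upt del: upt_Suc)
  have first_row: "map (\<lambda>j. x * xs ! j) [0..<length xs] = map ((*) x) xs"
    by (rule nth_equalityI) simp_all
  have drop_empty: "\<And>g L. concat (concat (map (\<lambda>i. [] # g i) L)) = concat (concat (map g L))"
    by (induct_tac L) simp_all
  show ?thesis
    unfolding pre2_def idx
    by (simp add: product_concat_map comp_def map_concat first_row drop_empty
        cong: if_cong del: mset_upt)
qed

lemma pre2_map_power: "pre2 (map (\<lambda>x. x ^ k) xs) = image_mset (\<lambda>x. x ^ k) (pre2 xs)"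
  by (induction xs) (simp_all add: pre2_Cons power_mult_distrib multiset.map_comp comp_def)

lemma sum_list_square:
  "(sum_list xs)\<^sup>2 = sum_list (map (\<lambda>x. x\<^sup>2) xs) + 2 * \<Sum>\<^sub># (pre2 xs)"
proof (induction xs)
  case (Cons x xs)
  have "\<Sum>\<^sub># (image_mset ((*) x) (mset xs)) = x * sum_list xs"
    by (induction xs) (simp_all add: algebra_simps)
  with Cons show ?case
    by (simp add: pre2_Cons power2_sum algebra_simps)
qed simp

lemma power_sum_double:
  "sum_list (map (\<lambda>x. x ^ (2 * k)) xs) + 2 * \<Sum>\<^sub># (image_mset (\<lambda>x. x ^ k) (pre2 xs))
     = (sum_list (map (\<lambda>x. x ^ k) xs))\<^sup>2"
  using sum_list_square[of "map (\<lambda>x. x ^ k) xs"]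
  by (simp add: pre2_map_power comp_def power_even_eq)

lemma power_sums_eq_if_pre2_eq:
  assumes "sum_list xs = sum_list ys" and "pre2 xs = pre2 ys"
  shows "sum_list (map (\<lambda>x. x ^ 2 ^ m) xs) = sum_list (map (\<lambda>x. x ^ 2 ^ m) ys)"
proof (induction m)
  case 0
  show ?case using assms(1) by simp
next
  case (Suc m)
  with power_sum_double[of "2 ^ m" xs] power_sum_double[of "2 ^ m" ys] assms(2)
  show ?case by simp
qed

theorem mainTheorem3:
  fixes n :: nat and lam mu :: "nat list"
  assumes "0 < n"
    and "is_partition n lam" and "is_partition n mu"
    and "pre2 lam = pre2 mu"
  shows "\<forall>m::nat. (\<Sum>i<length lam. (lam ! i) ^ (2 ^ m)) = (\<Sum>i<length mu. (mu ! i) ^ (2 ^ m))"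
proof
  fix m :: nat
  have "sum_list lam = sum_list mu"
    using assms(2,3) by (simp add: is_partition_def)
  from power_sums_eq_if_pre2_eq[OF this assms(4)]
  show "(\<Sum>i<length lam. (lam ! i) ^ (2 ^ m)) = (\<Sum>i<length mu. (mu ! i) ^ (2 ^ m))"
    by (simp add: sum_list_sum_nth lessThan_atLeast0)
qed

end
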